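(* Let $n$ be a positive integer and $i,k\in\{1,\ldots,n\}$. Let $H\sim\text{Hyp}(n,i,k)$ and $X\sim\text{Bin}(k,\frac{i}{n})$, and assume that: (1) $\frac{ik}{n}\in (m-1, m]$ for some integer $m\in \{2,3,\ldots, \min\{i,k\}-2\}$; (2) $\frac{(n-i)(n-k)}{n}> 1$. Then \[ \frac{\mathbb{P}(H=m)}{\mathbb{P}(X=m)} \,\ge\, \frac{e^{-1/8}}{2} \cdot \sqrt{\frac{i(n-i)(n-k)}{(i-m)(n-i-k+m)n}}. \]
   Context: $\text{Hyp}(n,i,k)$ denotes the hypergeometric distribution: the number of black marbles in a sample without replacement of size $k$ from an urn with $i$ black and $n-i$ white marbles, i.e. $\mathbb{P}(H=j)=\binom{i}{j}\binom{n-i}{k-j}/\binom{n}{k}$. $\text{Bin}(k,p)$ denotes the binomial distribution with $k$ trials and success probability $p$. *)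

theory Defs
  imports "HOL-Probability.Probability"
begin

definition hyp_prob :: "nat \<Rightarrow> nat \<Rightarrow> nat \<Rightarrow> nat \<Rightarrow> real" where
  "hyp_prob n i k j = real ((i choose j) * ((n - i) choose (k - j))) / real (n choose k)"

end

theory Submission
  imports Defs
begin

(* Write i = m + a, k = m + t, n = m + a + t + b; the hypotheses give a, b \<ge> 2. Then
   P(H = m) / P(X = m) = i! (n-i)! (n-k)! n^k / (a! b! n! i^m (n-i)^t).
   With the Stirling remainder r(N) = ln N! - (N + 1/2) ln N + N, which decreases while
   r(N) - 1/(12 N) increases, this ratio is at least e^(-1/12) sqrt(i (n-i) (n-k) / (a b n))
   ((a + \<delta>)/a)^a ((b - \<delta>)/b)^b, where \<delta> = m - i k / n lies in [0, 1).
   Pade-type bounds on ln (1 + x) give a ln ((a + \<delta>)/a) \<ge> \<delta> - 1/5 and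
   b ln ((b - \<delta>)/b) \<ge> - \<delta> - 1/2, so \<delta> cancels, and -1/12 - 7/10 \<ge> -1/8 - ln 2. *)

lemma nonneg_if_deriv_nonneg:
  fixes f f' :: "real \<Rightarrow> real"
  assumes "0 \<le> x" and "f 0 = 0"
    and "\<And>y. 0 \<le> y \<Longrightarrow> (f has_real_derivative f' y) (at y)"
    and "\<And>y. 0 \<le> y \<Longrightarrow> 0 \<le> f' y"
  shows "0 \<le> f x"
  using DERIV_nonneg_imp_nondecreasing[OF assms(1), of f] assms(2-4) by fastforce

lemma ln_one_plus_ge:
  fixes x :: real assumes "0 \<le> x" shows "2*x / (2+x) \<le> ln (1+x)"
proof -
  have "0 \<le> ln (1+x) - 2*x / (2+x)"
  proof (rule nonneg_if_deriv_nonneg[OF assms])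
    fix y :: real assume "0 \<le> y"
    then show "((\<lambda>x. ln (1+x) - 2*x / (2+x)) has_real_derivative y^2 / ((1+y) * (2+y)^2)) (at y)"
      by (auto intro!: derivative_eq_intros) (simp add: divide_simps, algebra)
  qed simp_all
  then show ?thesis by simp
qed

lemma ln_one_plus_le:
  fixes x :: real assumes "0 \<le> x" shows "ln (1+x) \<le> x * (2+x) / (2 * (1+x))"
proof -
  have "0 \<le> x * (2+x) / (2 * (1+x)) - ln (1+x)"
  proof (rule nonneg_if_deriv_nonneg[OF assms])
    fix y :: real assume "0 \<le> y"
    then show "((\<lambda>x. x * (2+x) / (2 * (1+x)) - ln (1+x)) has_real_derivative y^2 / (2 * (1+y)^2)) (at y)"
      by (auto intro!: derivative_eq_intros) (simp add: divide_simps, algebra)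
  qed simp_all
  then show ?thesis by simp
qed

lemma ln_one_plus_le_pade:
  fixes x :: real assumes "0 \<le> x"
  shows "ln (1+x) \<le> x * (12 + 12*x + x^2) / (6 * (2+x) * (1+x))"
proof -
  have "0 \<le> x * (12 + 12*x + x^2) / (6 * (2+x) * (1+x)) - ln (1+x)"
  proof (rule nonneg_if_deriv_nonneg[OF assms])
    fix y :: real assume "0 \<le> y"
    then show "((\<lambda>x. x * (12 + 12*x + x^2) / (6 * (2+x) * (1+x)) - ln (1+x))
        has_real_derivative y^4 / (6 * (1+y)^2 * (2+y)^2)) (at y)"
      by (auto intro!: derivative_eq_intros) (simp add: divide_simps, algebra)
  qed simp_all
  then show ?thesis by simp
qed

lemma mult_ln_one_plus_div_ge:
  fixes A \<delta> :: real
  assumes "2 \<le> A" and "0 \<le> \<delta>" and "\<delta> \<le> 1"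
  shows "\<delta> - 1/5 \<le> A * ln ((A + \<delta>) / A)"
proof -
  have "\<delta> - 1/5 \<le> 2*A*\<delta> / (2*A + \<delta>)"
  proof -
    have "\<delta>*\<delta> \<le> \<delta>" using assms(2,3) by (simp add: mult_left_le)
    then show ?thesis using assms by (simp add: field_simps)
  qed
  also have "\<dots> = A * (2*(\<delta>/A) / (2 + \<delta>/A))" using assms(1) by (simp add: field_simps)
  also have "\<dots> \<le> A * ln (1 + \<delta>/A)"
    using assms by (intro mult_left_mono ln_one_plus_ge) auto
  also have "1 + \<delta>/A = (A + \<delta>) / A" using assms(1) by (simp add: field_simps)
  finally show ?thesis .
qed

lemma mult_ln_one_minus_div_ge:
  fixes B \<delta> :: real
  assumes "0 \<le> \<delta>" and "\<delta> \<le> 1" and "1 < B - \<delta>"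
  shows "-\<delta> - 1/2 \<le> B * ln ((B - \<delta>) / B)"
proof -
  define x where "x = \<delta> / (B - \<delta>)"
  have x: "0 \<le> x" using assms by (simp add: x_def)
  have "ln ((B - \<delta>) / B) = - ln (1 + x)"
    using assms by (simp add: x_def field_simps ln_div)
  have "B * ln (1 + x) \<le> B * (x * (2+x) / (2 * (1+x)))"
    using assms x by (intro mult_left_mono ln_one_plus_le) auto
  also have "\<dots> = \<delta> + \<delta>*\<delta> / (2 * (B - \<delta>))"
  proof -
    have "0 < B - \<delta>" "0 < B" using assms by auto
    then show ?thesis unfolding x_def by (simp add: divide_simps) algebra
  qed
  also have "\<dots> \<le> \<delta> + 1/2"
  proof -
    have "\<delta>*\<delta> \<le> 1" using assms(1,2) by (simp add: mult_le_one)
    then show ?thesis using assms by (simp add: field_simps)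
  qed
  finally show ?thesis using \<open>ln ((B - \<delta>) / B) = - ln (1 + x)\<close> by simp
qed

definition stirling_rem :: "nat \<Rightarrow> real" where
  "stirling_rem N = ln (fact N) - (real N + 1/2) * ln (real N) + real N"

lemma stirling_rem_diff:
  assumes "1 \<le> j"
  shows "stirling_rem j - stirling_rem (Suc j) = (real j + 1/2) * ln (1 + 1/real j) - 1"
proof -
  have "ln (1 + 1/real j) = ln (real j + 1) - ln (real j)"
    using assms by (simp add: field_simps ln_div)
  moreover have "ln (fact (Suc j)) = ln (real j + 1) + ln (fact j)"
    by (simp add: ln_mult add.commute)
  ultimately show ?thesis unfolding stirling_rem_def by (simp only:) (simp add: algebra_simps)
qed

lemma stirling_rem_diff_bounds:
  assumes "1 \<le> j"
  shows "0 \<le> stirling_rem j - stirling_rem (Suc j)"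
    and "stirling_rem j - stirling_rem (Suc j) \<le> 1/(12 * real j) - 1/(12 * real (Suc j))"
proof -
  define x where "x = 1 / real j"
  have x: "0 \<le> x" by (simp add: x_def)
  have "1 = (real j + 1/2) * (2*x / (2+x))"
    using assms by (simp add: x_def field_simps)
  also have "\<dots> \<le> (real j + 1/2) * ln (1+x)"
    using x by (intro mult_left_mono ln_one_plus_ge) auto
  finally show "0 \<le> stirling_rem j - stirling_rem (Suc j)"
    using stirling_rem_diff[OF assms] by (simp add: x_def)
  have "(real j + 1/2) * ln (1+x) \<le> (real j + 1/2) * (x * (12 + 12*x + x^2) / (6 * (2+x) * (1+x)))"
    using x by (intro mult_left_mono ln_one_plus_le_pade) auto
  also have "\<dots> = 1 + 1/(12 * real j) - 1/(12 * real (Suc j))"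
    using assms unfolding x_def by (simp add: divide_simps) algebra
  finally show "stirling_rem j - stirling_rem (Suc j) \<le> 1/(12 * real j) - 1/(12 * real (Suc j))"
    using stirling_rem_diff[OF assms] by (simp add: x_def)
qed

lemma stirling_rem_antimono:
  assumes "1 \<le> M" and "M \<le> N"
  shows "stirling_rem N \<le> stirling_rem M"
  using assms(2)
proof (induction N rule: dec_induct)
  case (step N)
  then show ?case using stirling_rem_diff_bounds(1)[of N] assms(1) by simp
qed simp

lemma stirling_rem_minus_inverse_mono:
  assumes "1 \<le> M" and "M \<le> N"
  shows "stirling_rem M - 1/(12 * real M) \<le> stirling_rem N - 1/(12 * real N)"
  using assms(2)
proof (induction N rule: dec_induct)
  case (step N)
  then show ?case using stirling_rem_diff_bounds(2)[of N] assms(1) by simp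
qed simp

lemma stirling_rem_ge:
  assumes "2 \<le> M" and "M \<le> N"
  shows "stirling_rem M - 1/24 \<le> stirling_rem N"
proof -
  have "stirling_rem M - 1/(12 * real M) \<le> stirling_rem N - 1/(12 * real N)"
    using assms by (intro stirling_rem_minus_inverse_mono) auto
  moreover have "1/(12 * real M) \<le> 1/24" using assms(1) by (simp add: field_simps)
  moreover have "0 \<le> 1/(12 * real N)" by simp
  ultimately show ?thesis by linarith
qed

definition hyp_bin_ratio :: "nat \<Rightarrow> nat \<Rightarrow> nat \<Rightarrow> nat \<Rightarrow> real" where
  "hyp_bin_ratio m a t b =
     fact (m+a) * fact (t+b) * fact (a+b) * real (m+a+t+b) ^ (m+t)
     / (fact a * fact b * fact (m+a+t+b) * real (m+a) ^ m * real (t+b) ^ t)"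

lemma hyp_prob_div_pmf_binomial:
  assumes "0 < m+a+t+b"
  shows "hyp_prob (m+a+t+b) (m+a) (m+t) m / pmf (binomial_pmf (m+t) (real (m+a) / real (m+a+t+b))) m
    = hyp_bin_ratio m a t b"
proof -
  define n where "n = m+a+t+b"
  have n: "real n > 0" using assms by (simp only: n_def of_nat_0_less_iff)
  have p: "0 \<le> real (m+a) / real n" "real (m+a) / real n \<le> 1" using n by (auto simp: n_def)
  have q: "1 - real (m+a) / real n = real (t+b) / real n" using n by (simp add: n_def field_simps)
  have s: "n - (m+a) = t+b" "m+t-m = t" by (auto simp: n_def)
  have c: "real (n choose (m+t)) = fact n / (fact (m+t) * fact (a+b))"
    by (subst binomial_fact) (auto simp: n_def)
  show ?thesis
    unfolding n_def[symmetric] hyp_prob_def hyp_bin_ratio_def pmf_binomial[OF p] q s of_nat_mult c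
    using n by (simp add: binomial_fact field_simps power_divide power_add)
qed

lemma ln_hyp_bin_ratio_eq:
  fixes m a t b :: nat
  assumes "1 \<le> a" and "1 \<le> b"
  defines "n \<equiv> m+a+t+b"
  shows "ln (hyp_bin_ratio m a t b) =
      (stirling_rem (m+a) - stirling_rem n) + (stirling_rem (t+b) - stirling_rem b)
    + (stirling_rem (a+b) - stirling_rem a)
    + ln (real (m+a) * real (t+b) * real (a+b) / (real a * real b * real n)) / 2
    + real a * ln (real (m+a) * real (a+b) / (real n * real a))
    + real b * ln (real (t+b) * real (a+b) / (real n * real b))"
proof -
  have "ln (fact N) = stirling_rem N + (real N + 1/2) * ln (real N) - real N" for N
    by (simp add: stirling_rem_def)
  with assms(1,2) show ?thesis unfolding hyp_bin_ratio_def n_def[symmetric]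
    by (simp add: ln_mult ln_div ln_realpow del: of_nat_add) (simp add: n_def field_simps)
qed

lemma hyp_bin_ratio_ge:
  fixes m a t b :: nat
  defines "n \<equiv> m+a+t+b"
  assumes "2 \<le> a" and "2 \<le> b"
    and "real m - 1 < real (m+a) * real (m+t) / real n"
    and "real (m+a) * real (m+t) / real n \<le> real m"
    and "1 < real (t+b) * real (a+b) / real n"
  shows "exp (-1/8) / 2 * sqrt (real (m+a) * real (t+b) * real (a+b) / (real a * real b * real n))
    \<le> hyp_bin_ratio m a t b"
proof -
  define \<delta> where "\<delta> = real m - real (m+a) * real (m+t) / real n"
  define S where "S = real (m+a) * real (t+b) * real (a+b) / (real a * real b * real n)"
  define R where "R = hyp_bin_ratio m a t b"
  have n: "0 < real n" using assms(2) by (simp add: n_def)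
  have N: "real n = real m + real a + real t + real b" by (simp add: n_def)
  have \<delta>: "0 \<le> \<delta>" "\<delta> \<le> 1" using assms(4,5) by (auto simp: \<delta>_def)
  have a_shift: "real (m+a) * real (a+b) / real n = real a + \<delta>"
    using n unfolding \<delta>_def by (simp add: field_simps) (simp add: N algebra_simps)
  have b_shift: "real (t+b) * real (a+b) / real n = real b - \<delta>"
    using n unfolding \<delta>_def by (simp add: field_simps) (simp add: N algebra_simps)
  have "\<delta> - 1/5 \<le> real a * ln ((real a + \<delta>) / real a)"
    using assms(2) \<delta> by (intro mult_ln_one_plus_div_ge) auto
  moreover have "-\<delta> - 1/2 \<le> real b * ln ((real b - \<delta>) / real b)"
    using assms(6) b_shift \<delta> by (intro mult_ln_one_minus_div_ge) auto
  ultimately have entropy: "-7/10 \<le> real a * ln (real (m+a) * real (a+b) / (real n * real a))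
      + real b * ln (real (t+b) * real (a+b) / (real n * real b))"
    by (simp add: a_shift[symmetric] b_shift[symmetric])
  have stirling: "-1/12 \<le> (stirling_rem (m+a) - stirling_rem n)
      + (stirling_rem (t+b) - stirling_rem b) + (stirling_rem (a+b) - stirling_rem a)"
    using stirling_rem_antimono[of "m+a" n] stirling_rem_ge[of b "t+b"] stirling_rem_ge[of a "a+b"]
      assms(2,3) by (simp add: n_def)
  have "2/3 \<le> ln (2::real)" using ln_one_plus_ge[of 1] by simp
  then have lower: "-1/8 - ln 2 + ln S / 2 \<le> ln R"
    using ln_hyp_bin_ratio_eq[of a b m t, folded n_def] entropy stirling assms(2,3)
    unfolding S_def R_def by linarith
  have "0 < S" using n assms(2,3) by (simp add: S_def)
  then have "exp (-1/8) / 2 * sqrt S = exp (-1/8 - ln 2 + ln S / 2)"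
    by (simp add: exp_add exp_diff ln_sqrt[symmetric])
  also have "\<dots> \<le> exp (ln R)" using lower by simp
  also have "\<dots> = R" using assms(2,3) by (simp add: R_def hyp_bin_ratio_def)
  finally show ?thesis unfolding S_def R_def .
qed

theorem lemma4:
  fixes n i k m :: nat
  assumes "n \<ge> 1" and "i \<in> {1..n}" and "k \<in> {1..n}"
    and "2 \<le> m" and "m \<le> min i k - 2"
    and "real m - 1 < real i * real k / real n" and "real i * real k / real n \<le> real m"
    and "(real n - real i) * (real n - real k) / real n > 1"
  shows "hyp_prob n i k m / pmf (binomial_pmf k (real i / real n)) m
    \<ge> exp (-1/8) / 2 * sqrt (real i * (real n - real i) * (real n - real k) /
        ((real i - real m) * (real n - real i - real k + real m) * real n))"
proof -
  have "(real n - real i) * (real n - real k) / real n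
      = real n - real i - real k + real i * real k / real n"
    using assms(1) by (simp add: field_simps)
  then have n_large: "i + k + 2 \<le> n + m" using assms(7,8) by linarith
  have i_large: "m + 2 \<le> i" and k_large: "m + 2 \<le> k"
    using assms(4,5) by (auto simp: min_def split: if_splits)
  obtain a t b where i: "i = m+a" and k: "k = m+t" and n: "n = m+a+t+b"
    and a: "2 \<le> a" and b: "2 \<le> b"
  proof
    show "i = m + (i-m)" "k = m + (k-m)" "2 \<le> i - m" using i_large k_large by simp_all
    show "n = m + (i-m) + (k-m) + (n+m-i-k)" "2 \<le> n+m-i-k" using n_large i_large k_large by simp_all
  qed
  have "hyp_prob n i k m / pmf (binomial_pmf k (real i / real n)) m = hyp_bin_ratio m a t b"
    unfolding i k n by (rule hyp_prob_div_pmf_binomial) (use a in simp)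
  moreover have "real i * (real n - real i) * (real n - real k) /
      ((real i - real m) * (real n - real i - real k + real m) * real n)
    = real (m+a) * real (t+b) * real (a+b) / (real a * real b * real (m+a+t+b))"
    unfolding i k n by simp
  ultimately show ?thesis
    using hyp_bin_ratio_ge[OF a b] assms(6-8) unfolding i k n by simp
qed

end
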